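(* Let $a,b$ be coprime integers with $0<a\le b$ and let $a/b=[0,u_1,\dots,u_n]$ be a simple continued fraction expansion of even depth $n=2i$ ($i\ge 1$), with convergents $p_k/q_k$. Let $D$ be the standard line $\{(x,y)\in\mathbb{Z}^2: 0\le ax-by<a+b\}$, let $U_1=(0,0)$ and $U_2=(b,a)$, let $L_1$ be the lower leaning point of $D$ with $0<x\le b$, and $L_2=L_1+(b,a)$. Then \[ \overrightarrow{U_1L_1}=(q_{2i-1}+1,\;p_{2i-1}-1),\qquad \overrightarrow{L_1U_2}=(u_{2i}-1)(q_{2i-1},p_{2i-1})+(q_{2i-2},p_{2i-2})+(-1,1). \] Moreover, the Freeman word of the DSS $[U_1L_1]$ has $E(z_{2i-2})^{u_{2i-1}}$ as a left factor (prefix), and the Freeman word of the DSS $[L_1U_2]$ has $E(z_{2i-1})^{u_{2i}-1}$ as a right factor (suffix).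
   Context: A standard line $\{\mu\le ax-by<\mu+|a|+|b|\}$ is a 4-connected path of lattice points; points with $ax-by=\mu$ are upper leaning points, those with $ax-by=\mu+|a|+|b|-1$ lower leaning points. For $P,Q\in D$, $[PQ]$ denotes the path of points of $D$ from $P$ to $Q$; its Freeman word records its unit moves, $0$ for $(1,0)$ and $1$ for $(0,1)$. For $a/b=[0,u_1,\dots,u_n]$, $z_k=p_k/q_k=[0,u_1,\dots,u_k]$ with $(p_0,q_0)=(0,1)$, $(p_{-1},q_{-1})=(1,0)$ and $(p_k,q_k)=u_k(p_{k-1},q_{k-1})+(p_{k-2},q_{k-2})$. Words: $E(z_0)=0$, $E(z_1)=0^{u_1}1$, $E(z_{2j+1})=E(z_{2j})^{u_{2j+1}}E(z_{2j-1})$, $E(z_{2j})=E(z_{2j-2})E(z_{2j-1})^{u_{2j}}$. *)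

theory Defs
  imports Complex_Main "HOL-Library.Sublist"
begin

fun cfv :: "nat list \<Rightarrow> real" where
  "cfv [] = 0"
| "cfv [x] = real x"
| "cfv (x # y # ys) = real x + 1 / cfv (y # ys)"

definition cf0 :: "(nat \<Rightarrow> nat) \<Rightarrow> nat \<Rightarrow> real" where
  "cf0 u n = 1 / cfv (map u [1..<Suc n])"

(* convergents p_k, q_k for k >= 0, using p_{-1}=1, q_{-1}=0, p_0=0, q_0=1 *)
fun cp :: "(nat \<Rightarrow> nat) \<Rightarrow> nat \<Rightarrow> nat" where
  "cp u 0 = 0"
| "cp u (Suc 0) = u 1 * 0 + 1"
| "cp u (Suc (Suc k)) = u (Suc (Suc k)) * cp u (Suc k) + cp u k"

fun cq :: "(nat \<Rightarrow> nat) \<Rightarrow> nat \<Rightarrow> nat" where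
  "cq u 0 = 1"
| "cq u (Suc 0) = u 1 * 1 + 0"
| "cq u (Suc (Suc k)) = u (Suc (Suc k)) * cq u (Suc k) + cq u k"

definition wpow :: "'a list \<Rightarrow> nat \<Rightarrow> 'a list" where
  "wpow w k = concat (replicate k w)"

fun E :: "(nat \<Rightarrow> nat) \<Rightarrow> nat \<Rightarrow> nat list" where
  "E u 0 = [0]"
| "E u (Suc 0) = wpow [0] (u 1) @ [1]"
| "E u (Suc (Suc k)) =
     (if odd (Suc (Suc k))
      then wpow (E u (Suc k)) (u (Suc (Suc k))) @ E u k
      else E u k @ wpow (E u (Suc k)) (u (Suc (Suc k))))"

definition in_line :: "int \<Rightarrow> int \<Rightarrow> int \<Rightarrow> int \<times> int \<Rightarrow> bool" where
  "in_line a b mu P \<longleftrightarrow> mu \<le> a * fst P - b * snd P \<and> a * fst P - b * snd P < mu + \<bar>a\<bar> + \<bar>b\<bar>"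

definition lower_leaning :: "int \<Rightarrow> int \<Rightarrow> int \<Rightarrow> int \<times> int \<Rightarrow> bool" where
  "lower_leaning a b mu P \<longleftrightarrow> a * fst P - b * snd P = mu + \<bar>a\<bar> + \<bar>b\<bar> - 1"

(* next point of the 4-connected path of D (for a, b >= 0): (x+1,y) if in D, else (x,y+1) *)
definition next_pt :: "int \<Rightarrow> int \<Rightarrow> int \<Rightarrow> int \<times> int \<Rightarrow> int \<times> int" where
  "next_pt a b mu P = (if in_line a b mu (fst P + 1, snd P) then (fst P + 1, snd P) else (fst P, snd P + 1))"

fun fword :: "int \<Rightarrow> int \<Rightarrow> int \<Rightarrow> int \<times> int \<Rightarrow> nat \<Rightarrow> nat list" where
  "fword a b mu P 0 = []"
| "fword a b mu P (Suc m) =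
     (if next_pt a b mu P = (fst P + 1, snd P) then 0 else 1) # fword a b mu (next_pt a b mu P) m"

definition freeman :: "int \<Rightarrow> int \<Rightarrow> int \<Rightarrow> int \<times> int \<Rightarrow> int \<times> int \<Rightarrow> nat list" where
  "freeman a b mu P Q = fword a b mu P (nat ((fst Q + snd Q) - (fst P + snd P)))"

end

theory Submission imports Defs begin

text \<open>The expansion identifies a/b with the last convergent p_n/q_n, and the word E(z_k)
is the lower Christoffel word of slope p_k/q_k: consecutive convergents satisfy
q_k p_(k+1) - p_k q_(k+1) = (-1)^k, and Christoffel words of such Farey neighbours concatenate to the
Christoffel word of the mediant. The Freeman word of one period of D is the Christoffel word of a/b,
hence equals E(z_n). Since n is even, (q_(n-1)+1, p_(n-1)-1) lies on the lower leaning line, and it is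
the only lattice point there with 0 < x \<le> b; it cuts E(z_n) = E(z_(n-2)) E(z_(n-1))^(u_n) after
|E(z_(n-1))| letters, which gives the prefix and suffix claims.\<close>

section \<open>Christoffel words\<close>

definition christoffel_word :: "nat \<Rightarrow> nat \<Rightarrow> nat list" where
  "christoffel_word p q = map (\<lambda>s. p*(s+1) div (p+q) - p*s div (p+q)) [0..<p+q]"

lemma length_christoffel_word [simp]: "length (christoffel_word p q) = p + q"
  by (simp add: christoffel_word_def)

lemma nth_christoffel_word:
  "s < p + q \<Longrightarrow> christoffel_word p q ! s = p*(s+1) div (p+q) - p*s div (p+q)"
  by (simp add: christoffel_word_def)

lemma mediant_div_left:
  fixes p1 q1 p2 q2 s :: nat
  assumes det: "q1*p2 = p1*q2 + 1" and pos1: "p1 + q1 \<ge> 1" and pos2: "p2 + q2 \<ge> 1"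
    and s: "s \<le> p1 + q1"
  shows "(p1+p2)*s div (p1+q1+(p2+q2)) = p1*s div (p1+q1)"
proof -
  define M1 M P f j where "M1 = p1+q1" and "M = p1+q1+(p2+q2)" and "P = p1+p2"
    and "f = p1*s div M1" and "j = p1*s mod M1"
  have key: "M1*P = p1*M + 1" using det unfolding M1_def P_def M_def by (simp add: algebra_simps)
  have jl: "j < M1" unfolding j_def M1_def using pos1 by (intro mod_less_divisor) linarith
  have "P*s*M1 = p1*s*M + s" using key by (metis add_mult_distrib mult.commute mult.left_commute mult_1)
  also have "p1*s = f*M1 + j" unfolding f_def j_def by simp
  finally have e: "P*s*M1 = f*M1*M + j*M + s" by (simp add: algebra_simps)
  have "M*f*M1 \<le> P*s*M1" using e by (simp add: algebra_simps)
  moreover have "0 < M1" using pos1 unfolding M1_def by linarith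
  ultimately have lo: "M*f \<le> P*s" by simp
  have "(j+1)*M \<le> M1*M" using jl by (intro mult_le_mono1) simp
  moreover have "s < M" using s pos2 unfolding M_def by simp
  ultimately have "j*M + s < M1*M" by simp
  hence "P*s*M1 < M*Suc f*M1" using e by (simp add: algebra_simps)
  hence hi: "P*s < M*Suc f" by simp
  show ?thesis using div_nat_eqI[OF lo hi] unfolding P_def M_def f_def M1_def .
qed

lemma mediant_div_right:
  fixes p1 q1 p2 q2 t :: nat
  assumes det: "q1*p2 = p1*q2 + 1" and pos1: "p1 + q1 \<ge> 1" and pos2: "p2 + q2 \<ge> 1"
    and t: "t \<le> p2 + q2"
  shows "(p1+p2)*(p1+q1+t) div (p1+q1+(p2+q2)) = p1 + p2*t div (p2+q2)"
proof -
  define M1 M2 M P g j where "M1 = p1+q1" and "M2 = p2+q2" and "M = p1+q1+(p2+q2)"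
    and "P = p1+p2" and "g = p2*t div M2" and "j = p2*t mod M2"
  have key1: "M1*P = p1*M + 1" and key2: "M2*P + 1 = p2*M"
    using det unfolding M1_def M2_def P_def M_def by (simp_all add: algebra_simps)
  have jl: "j < M2" unfolding j_def M2_def using pos2 by (intro mod_less_divisor) linarith
  have "P*(M1+t)*M2 + t = (M1*P)*M2 + t*(M2*P + 1)" by (simp add: algebra_simps)
  also have "\<dots> = p1*M*M2 + M2 + (p2*t)*M" using key1 key2 by (simp add: algebra_simps)
  also have "p2*t = g*M2 + j" unfolding g_def j_def by simp
  finally have e: "P*(M1+t)*M2 + t = M*(p1+g)*M2 + M2 + j*M" by (simp add: algebra_simps)
  have "M*(p1+g)*M2 \<le> P*(M1+t)*M2" using e t unfolding M2_def by linarith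
  moreover have "0 < M2" using pos2 unfolding M2_def by linarith
  ultimately have lo: "M*(p1+g) \<le> P*(M1+t)" by simp
  have "(j+1)*M \<le> M2*M" using jl by (intro mult_le_mono1) simp
  moreover have "M2 < M" using pos1 unfolding M_def M2_def by linarith
  moreover have "M*Suc (p1+g)*M2 = M*(p1+g)*M2 + M2*M" by (simp add: algebra_simps)
  ultimately have "P*(M1+t)*M2 < M*Suc (p1+g)*M2" using e by (simp add: algebra_simps)
  hence hi: "P*(M1+t) < M*Suc (p1+g)" by simp
  show ?thesis using div_nat_eqI[OF lo hi] unfolding P_def M_def g_def M1_def M2_def .
qed

lemma christoffel_word_append:
  fixes p1 q1 p2 q2 :: nat
  assumes det: "q1*p2 = p1*q2 + 1" and pos1: "p1 + q1 \<ge> 1" and pos2: "p2 + q2 \<ge> 1"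
  shows "christoffel_word p1 q1 @ christoffel_word p2 q2 = christoffel_word (p1+p2) (q1+q2)"
proof (rule nth_equalityI)
  fix s assume "s < length (christoffel_word p1 q1 @ christoffel_word p2 q2)"
  hence s: "s < p1+q1+(p2+q2)" by simp
  have M: "p1 + p2 + (q1 + q2) = p1+q1+(p2+q2)" by simp
  show "(christoffel_word p1 q1 @ christoffel_word p2 q2) ! s = christoffel_word (p1+p2) (q1+q2) ! s"
  proof (cases "s < p1+q1")
    case True
    then show ?thesis
      using mediant_div_left[OF det pos1 pos2, of s] mediant_div_left[OF det pos1 pos2, of "s+1"] s
      by (simp add: nth_append nth_christoffel_word M)
  next
    case False
    define t where "t = s - (p1+q1)"
    have st: "s = p1+q1+t" and tl: "t < p2+q2" using False s unfolding t_def by auto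
    show ?thesis
      using mediant_div_right[OF det pos1 pos2, of t] mediant_div_right[OF det pos1 pos2, of "t+1"] tl
      unfolding st by (simp add: nth_append nth_christoffel_word M)
  qed
qed simp

lemma wpow_0 [simp]: "wpow w 0 = []"
  by (simp add: wpow_def)

lemma wpow_Suc: "wpow w (Suc k) = w @ wpow w k"
  by (simp add: wpow_def)

lemma wpow_Suc_right: "wpow w (Suc k) = wpow w k @ w"
  by (induction k) (simp_all add: wpow_def)

lemma christoffel_word_wpow_append:
  assumes det: "q1*p2 = p1*q2 + 1" and pos1: "p1 + q1 \<ge> 1" and pos2: "p2 + q2 \<ge> 1"
  shows "wpow (christoffel_word p1 q1) k @ christoffel_word p2 q2
    = christoffel_word (k*p1 + p2) (k*q1 + q2)"
proof (induction k)
  case (Suc k)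
  have det': "q1*(k*p1 + p2) = p1*(k*q1 + q2) + 1" using det by (simp add: algebra_simps)
  have "wpow (christoffel_word p1 q1) (Suc k) @ christoffel_word p2 q2
      = christoffel_word p1 q1 @ christoffel_word (k*p1 + p2) (k*q1 + q2)"
    using Suc by (simp add: wpow_Suc)
  also have "\<dots> = christoffel_word (p1 + (k*p1 + p2)) (q1 + (k*q1 + q2))"
    by (rule christoffel_word_append[OF det' pos1]) (use pos2 in simp)
  finally show ?case by (simp add: algebra_simps)
qed simp

lemma christoffel_word_append_wpow:
  assumes det: "q2*p1 = p2*q1 + 1" and pos1: "p1 + q1 \<ge> 1" and pos2: "p2 + q2 \<ge> 1"
  shows "christoffel_word p2 q2 @ wpow (christoffel_word p1 q1) k
    = christoffel_word (p2 + k*p1) (q2 + k*q1)"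
proof (induction k)
  case (Suc k)
  have det': "(q2 + k*q1)*p1 = (p2 + k*p1)*q1 + 1" using det by (simp add: algebra_simps)
  have "christoffel_word p2 q2 @ wpow (christoffel_word p1 q1) (Suc k)
      = christoffel_word (p2 + k*p1) (q2 + k*q1) @ christoffel_word p1 q1"
    using Suc by (simp add: wpow_Suc_right)
  also have "\<dots> = christoffel_word (p2 + k*p1 + p1) (q2 + k*q1 + q1)"
    by (rule christoffel_word_append[OF det' _ pos1]) (use pos2 in simp)
  finally show ?case by (simp add: algebra_simps)
qed simp

section \<open>Convergents\<close>

lemma cp_plus_cq_pos: "cp u k + cq u k \<ge> 1"
  by (induction u k rule: cp.induct) (auto simp: algebra_simps)

lemma convergents_det:
  "int (cq u k) * int (cp u (Suc k)) - int (cp u k) * int (cq u (Suc k)) = (-1)^k"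
  by (induction k) (simp_all add: algebra_simps)

lemma convergents_det_even:
  assumes "even k" shows "cq u k * cp u (Suc k) = cp u k * cq u (Suc k) + 1"
proof -
  have "int (cq u k * cp u (Suc k)) = int (cp u k * cq u (Suc k) + 1)"
    using convergents_det[of u k] assms by simp
  thus ?thesis by (simp only: of_nat_eq_iff)
qed

lemma convergents_det_odd:
  assumes "odd k" shows "cp u k * cq u (Suc k) = cq u k * cp u (Suc k) + 1"
proof -
  have "int (cp u k * cq u (Suc k)) = int (cq u k * cp u (Suc k) + 1)"
    using convergents_det[of u k] assms by simp
  thus ?thesis by (simp only: of_nat_eq_iff)
qed

lemma coprime_convergents: "coprime (int (cp u k)) (int (cq u k))"
proof (cases k)
  case (Suc k')
  show ?thesis
  proof (rule coprimeI)
    fix c assume "c dvd int (cp u k)" "c dvd int (cq u k)"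
    hence "c dvd (-1)^k'" using convergents_det[of u k'] Suc by (metis dvd_diff dvd_mult)
    moreover have "is_unit ((-1::int)^k')" by simp
    ultimately show "is_unit c" by (rule dvd_unit_imp_unit)
  qed
qed simp

lemma E_eq_christoffel_word: "E u k = christoffel_word (cp u k) (cq u k)"
proof (induction u k rule: cp.induct)
  case (1 u)
  show ?case by (simp add: christoffel_word_def)
next
  case (2 u)
  have "wpow (christoffel_word 0 1) (u 1) @ christoffel_word 1 0
      = christoffel_word (u 1 * 0 + 1) (u 1 * 1 + 0)"
    by (rule christoffel_word_wpow_append) simp_all
  moreover have "christoffel_word 0 1 = [0]" "christoffel_word 1 0 = [1]"
    by (simp_all add: christoffel_word_def)
  ultimately show ?case by simp
next
  case (3 u k)
  show ?case
  proof (cases "odd k")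
    case True
    have "cq u (Suc k) * cp u k = cp u (Suc k) * cq u k + 1"
      using convergents_det_odd[OF True, of u] by (simp add: algebra_simps)
    from christoffel_word_wpow_append[OF this cp_plus_cq_pos cp_plus_cq_pos] True 3 show ?thesis
      by simp
  next
    case False
    from christoffel_word_append_wpow[OF convergents_det_even cp_plus_cq_pos cp_plus_cq_pos] False 3
    show ?thesis by (simp add: add.commute)
  qed
qed

lemma length_E: "length (E u k) = cp u k + cq u k"
  by (simp add: E_eq_christoffel_word)

lemma cp_plus_cq_le_Suc:
  assumes "u (Suc k) \<ge> 1" shows "cp u k + cq u k \<le> cp u (Suc k) + cq u (Suc k)"
proof (cases k)
  case (Suc k')
  have "cp u k + cq u k \<le> u (Suc k) * (cp u k + cq u k)" using assms by simp
  then show ?thesis using Suc by (simp add: algebra_simps)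
qed (use assms in simp)

lemma convergents_pos:
  "\<forall>k\<in>{1..n}. u k \<ge> 1 \<Longrightarrow> cq u n \<ge> 1 \<and> (n \<ge> 1 \<longrightarrow> cp u n \<ge> 1)"
proof (induction u n rule: cp.induct)
  case (3 u k)
  then have "cq u (Suc k) \<ge> 1" "cp u (Suc k) \<ge> 1" "u (Suc (Suc k)) \<ge> 1" by auto
  then show ?case by (simp add: add_increasing2)
qed simp_all

lemma convergents_Suc_shift:
  "cp u (Suc n) = cq (\<lambda>j. u (Suc j)) n \<and>
   cq u (Suc n) = u 1 * cq (\<lambda>j. u (Suc j)) n + cp (\<lambda>j. u (Suc j)) n"
  by (induction u n rule: cp.induct) (simp_all add: algebra_simps)

lemma cfv_Cons: "xs \<noteq> [] \<Longrightarrow> cfv (x # xs) = real x + 1 / cfv xs"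
  by (cases xs) auto

lemma cfv_convergents:
  "\<forall>k\<in>{1..n}. u k \<ge> 1 \<Longrightarrow> n \<ge> 1 \<Longrightarrow> cfv (map u [1..<Suc n]) = real (cq u n) / real (cp u n)"
proof (induction n arbitrary: u)
  case (Suc n)
  show ?case
  proof (cases n)
    case (Suc n')
    define v where "v = (\<lambda>j. u (Suc j))"
    have vpos: "\<forall>k\<in>{1..n}. v k \<ge> 1" using Suc.prems(1) unfolding v_def by auto
    have m: "map u [1..<Suc (Suc n)] = u 1 # map v [1..<Suc n]"
      unfolding v_def by (simp add: upt_conv_Cons map_Suc_upt[symmetric] del: upt_Suc)
    have ne: "map v [1..<Suc n] \<noteq> []" using Suc by simp
    have pos: "cq v n \<ge> 1" "cp v n \<ge> 1" using convergents_pos[OF vpos] Suc by auto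
    have "cfv (map u [1..<Suc (Suc n)]) = real (u 1) + real (cp v n) / real (cq v n)"
      unfolding m using cfv_Cons[OF ne] Suc.IH[OF vpos] Suc by simp
    also have "\<dots> = real (cq u (Suc n)) / real (cp u (Suc n))"
      unfolding convergents_Suc_shift[THEN conjunct1] convergents_Suc_shift[THEN conjunct2]
        v_def[symmetric] using pos by (simp add: field_simps)
    finally show ?thesis .
  qed simp
qed simp

lemma cf0_convergents:
  "\<forall>k\<in>{1..n}. u k \<ge> 1 \<Longrightarrow> n \<ge> 1 \<Longrightarrow> cf0 u n = real (cp u n) / real (cq u n)"
  unfolding cf0_def by (simp only: cfv_convergents) simp

lemma coprime_fraction_eq_convergents:
  fixes a b :: int
  assumes "coprime a b" and "0 < a" and "0 < b" and "\<forall>k\<in>{1..n}. u k \<ge> 1" and "n \<ge> 1"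
    and "real_of_int a / real_of_int b = cf0 u n"
  shows "a = int (cp u n) \<and> b = int (cq u n)"
proof -
  have "cq u n \<ge> 1" using convergents_pos[OF assms(4)] by simp
  moreover have "real_of_int a / real_of_int b = real (cp u n) / real (cq u n)"
    using assms(4-6) cf0_convergents by simp
  ultimately have "real_of_int a * real (cq u n) = real (cp u n) * real_of_int b"
    using assms(3) by (simp add: frac_eq_eq)
  hence "a * int (cq u n) = int (cp u n) * b"
    by (metis of_int_eq_iff of_int_mult of_int_of_nat_eq)
  hence "\<bar>a\<bar> * \<bar>int (cq u n)\<bar> = \<bar>int (cp u n)\<bar> * \<bar>b\<bar>"
    using assms(2,3) by simp
  with coprime_crossproduct_int[OF assms(1) coprime_convergents] show ?thesis
    using assms(2,3) by simp
qed

section \<open>Freeman words of a standard line\<close>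

definition mechanical_word :: "int \<Rightarrow> int \<Rightarrow> int \<Rightarrow> nat \<Rightarrow> nat list" where
  "mechanical_word a N r k = map (\<lambda>s. nat ((r + a*(int s+1)) div N - (r + a*int s) div N)) [0..<k]"

lemma length_mechanical_word [simp]: "length (mechanical_word a N r k) = k"
  by (simp add: mechanical_word_def)

lemma nth_mechanical_word:
  "s < k \<Longrightarrow> mechanical_word a N r k ! s = nat ((r + a*(int s+1)) div N - (r + a*int s) div N)"
  by (simp add: mechanical_word_def)

lemma mechanical_word_Suc:
  "mechanical_word a N r (Suc k) = nat ((r+a) div N - r div N) # mechanical_word a N (r + a) k"
  unfolding mechanical_word_def map_upt_Suc by (simp add: algebra_simps)

lemma mechanical_word_shift:
  assumes "N > 0" shows "mechanical_word a N (r + N*c) k = mechanical_word a N r k"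
proof (rule nth_equalityI)
  fix s assume "s < length (mechanical_word a N (r + N*c) k)"
  moreover have "(r + N*c + a*t) div N = (r + a*t) div N + c" for t
    using assms by (metis add.commute add.left_commute div_mult_self1 less_irrefl mult.commute)
  ultimately show "mechanical_word a N (r + N*c) k ! s = mechanical_word a N r k ! s"
    by (simp add: nth_mechanical_word)
qed simp

lemma mechanical_word_add:
  "mechanical_word a N r (m + k) = mechanical_word a N r m @ mechanical_word a N (r + a*int m) k"
proof (rule nth_equalityI)
  fix s assume "s < length (mechanical_word a N r (m + k))"
  then show "mechanical_word a N r (m + k) ! s
      = (mechanical_word a N r m @ mechanical_word a N (r + a*int m) k) ! s"
    by (cases "s < m") (auto simp: nth_append nth_mechanical_word algebra_simps)
qed simp

lemma mechanical_word_christoffel_word: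
  "mechanical_word (int p) (int (p+q)) 0 (p+q) = christoffel_word p q"
proof (rule nth_equalityI)
  fix s assume "s < length (mechanical_word (int p) (int (p+q)) 0 (p+q))"
  moreover have "int p * (int s + 1) div int (p+q) = int (p*(s+1) div (p+q))"
    and "int p * int s div int (p+q) = int (p*s div (p+q))"
    by (simp_all only: zdiv_int of_nat_mult of_nat_add of_nat_1)
  moreover have "p*s div (p+q) \<le> p*(s+1) div (p+q)" by (intro div_le_mono) simp
  ultimately show "mechanical_word (int p) (int (p+q)) 0 (p+q) ! s = christoffel_word p q ! s"
    by (simp add: nth_mechanical_word nth_christoffel_word)
qed simp

lemma length_fword [simp]: "length (fword a b mu P k) = k"
  by (induction k arbitrary: P) simp_all

text \<open>Along D the remainder r = ax - by grows by a at each step, modulo a + b; the letter 1 is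
written exactly when this addition wraps around.\<close>

lemma fword_eq_mechanical_word:
  assumes a: "0 < a" and b: "0 < b" and P: "in_line a b 0 (x, y)"
  shows "fword a b 0 (x, y) k = mechanical_word a (a+b) (a*x - b*y) k"
  using P
proof (induction k arbitrary: x y)
  case (Suc k)
  define r where "r = a*x - b*y"
  have r: "0 \<le> r" "r < a+b" using Suc.prems a b unfolding r_def in_line_def by auto
  show ?case
  proof (cases "r + a < a + b")
    case True
    have "in_line a b 0 (x+1, y)" unfolding in_line_def using True r a b
      by (simp add: r_def algebra_simps)
    moreover have "(r+a) div (a+b) = 0" using True r a by simp
    moreover have "a*(x+1) - b*y = r + a" unfolding r_def by (simp add: algebra_simps)
    ultimately show ?thesis using Suc.IH[of "x+1" y] r
      unfolding r_def[symmetric] by (simp add: next_pt_def mechanical_word_Suc)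
  next
    case False
    have "\<not> in_line a b 0 (x+1, y)" unfolding in_line_def using False r a b
      by (simp add: r_def algebra_simps)
    moreover have "in_line a b 0 (x, y+1)" unfolding in_line_def using False r a b
      by (simp add: r_def algebra_simps)
    moreover have "(r+a) div (a+b) = 1"
    proof -
      have "(r+a) div (a+b) = (r - b) div (a+b) + 1" using a b by (simp add: div_add_self2[symmetric])
      also have "(r - b) div (a+b) = 0" using False r a b by (intro div_pos_pos_trivial) auto
      finally show ?thesis by simp
    qed
    moreover have "a*x - b*(y+1) = r + a - (a+b)" unfolding r_def by (simp add: algebra_simps)
    moreover have "mechanical_word a (a+b) (r+a) k = mechanical_word a (a+b) (r + a - (a+b)) k"
      using mechanical_word_shift[of "a+b" a "r + a - (a+b)" 1 k] a b by simp
    ultimately show ?thesis using Suc.IH[of x "y+1"] r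
      unfolding r_def[symmetric] by (simp add: next_pt_def mechanical_word_Suc)
  qed
qed (simp add: mechanical_word_def)

lemma freeman_eq_mechanical_word:
  assumes "0 < a" and "0 < b" and "in_line a b 0 P"
  shows "freeman a b 0 P Q
    = mechanical_word a (a+b) (a * fst P - b * snd P) (nat (fst Q + snd Q - (fst P + snd P)))"
  using fword_eq_mechanical_word[OF assms(1,2)] assms(3) by (cases P) (simp add: freeman_def)

text \<open>Q need not be given as a point of the path from P: for every point of D,
ax - by \<equiv> a(x + y) (mod a + b), so the path from P passes through every point of D further along.\<close>

lemma freeman_append:
  assumes a: "0 < a" and b: "0 < b" and P: "in_line a b 0 P" and Q: "in_line a b 0 Q"
    and PQ: "fst P + snd P \<le> fst Q + snd Q" and QR: "fst Q + snd Q \<le> fst R + snd R"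
  shows "freeman a b 0 P R = freeman a b 0 P Q @ freeman a b 0 Q R"
proof -
  define m k rP rQ where "m = nat (fst Q + snd Q - (fst P + snd P))"
    and "k = nat (fst R + snd R - (fst Q + snd Q))"
    and "rP = a * fst P - b * snd P" and "rQ = a * fst Q - b * snd Q"
  have mk: "nat (fst R + snd R - (fst P + snd P)) = m + k" using PQ QR unfolding m_def k_def by simp
  have "rP + a * int m = rQ + (a+b) * (snd Q - snd P)"
    using PQ unfolding m_def rP_def rQ_def by (simp add: algebra_simps)
  hence "mechanical_word a (a+b) (rP + a * int m) k = mechanical_word a (a+b) rQ k"
    using mechanical_word_shift[of "a+b"] a b by simp
  thus ?thesis
    unfolding freeman_eq_mechanical_word[OF a b P] freeman_eq_mechanical_word[OF a b Q] mk
      mechanical_word_add rP_def[symmetric] rQ_def[symmetric] m_def[symmetric] k_def[symmetric]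
    by simp
qed

lemma freeman_period:
  assumes "0 < p" and "0 < q"
  shows "freeman (int p) (int q) 0 (0, 0) (int q, int p) = christoffel_word p q"
proof -
  have "in_line (int p) (int q) 0 (0, 0)" using assms by (simp add: in_line_def)
  from freeman_eq_mechanical_word[OF _ _ this, of "(int q, int p)"] assms
  have "freeman (int p) (int q) 0 (0, 0) (int q, int p) = mechanical_word (int p) (int (p+q)) 0 (p+q)"
    by (simp add: add.commute flip: of_nat_add)
  thus ?thesis by (simp only: mechanical_word_christoffel_word)
qed

lemma christoffel_word_freeman_split:
  assumes "0 < p" and "0 < q" and "in_line (int p) (int q) 0 L"
    and "0 \<le> fst L + snd L" and "fst L + snd L \<le> int (p + q)"
  shows "christoffel_word p q
    = freeman (int p) (int q) 0 (0, 0) L @ freeman (int p) (int q) 0 L (int q, int p)"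
proof -
  have "freeman (int p) (int q) 0 (0, 0) (int q, int p)
      = freeman (int p) (int q) 0 (0, 0) L @ freeman (int p) (int q) 0 L (int q, int p)"
    by (rule freeman_append) (use assms in \<open>simp_all add: in_line_def add.commute\<close>)
  with freeman_period[OF assms(1,2)] show ?thesis by simp
qed

section \<open>The leaning points and the factorisation of E(z_n)\<close>

lemma lattice_point_unique_in_period:
  fixes a b x y x' y' :: int
  assumes "coprime a b" and "a*x - b*y = a*x' - b*y'"
    and "0 < x" and "x \<le> b" and "0 < x'" and "x' \<le> b"
  shows "x = x' \<and> y = y'"
proof -
  have eq: "a * (x - x') = b * (y - y')" using assms(2) by (simp add: algebra_simps)
  hence "b dvd a * (x - x')" by simp
  hence "b dvd x - x'" using assms(1) by (simp add: coprime_commute coprime_dvd_mult_right_iff)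
  moreover have "\<bar>x - x'\<bar> < \<bar>b\<bar>" using assms(3-6) by simp
  ultimately have "x = x'" using dvd_imp_le_int[of "x - x'" b] by fastforce
  with eq assms(3,4) show ?thesis by simp
qed

lemma lower_leaning_point_convergents:
  fixes a b :: int and L :: "int \<times> int" and j :: nat
  defines "n \<equiv> Suc (Suc (2*j))"
  assumes "coprime a b" and "\<forall>k\<in>{1..n}. u k \<ge> 1"
    and "a = int (cp u n)" and "b = int (cq u n)"
    and "lower_leaning a b 0 L" and "0 < fst L" and "fst L \<le> b"
  shows "L = (int (cq u (Suc (2*j))) + 1, int (cp u (Suc (2*j))) - 1)"
proof -
  have "cp u (Suc (2*j)) * cq u n = cq u (Suc (2*j)) * cp u n + 1"
    unfolding n_def by (rule convergents_det_odd) simp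
  hence det: "int (cp u (Suc (2*j))) * b = int (cq u (Suc (2*j))) * a + 1"
    unfolding assms(4,5) by (metis of_nat_1 of_nat_add of_nat_mult)
  have "cq u (2*j) \<ge> 1" "u n \<ge> 1" using convergents_pos[of "2*j" u] assms(3) unfolding n_def by auto
  hence "cq u (Suc (2*j)) + 1 \<le> u n * cq u (Suc (2*j)) + cq u (2*j)"
    using mult_le_mono1[of 1 "u n" "cq u (Suc (2*j))"] by linarith
  hence "cq u (Suc (2*j)) + 1 \<le> cq u n" unfolding n_def by simp
  hence bound: "int (cq u (Suc (2*j))) + 1 \<le> b" unfolding assms(5) by linarith
  obtain x y where L: "L = (x, y)" by (cases L)
  have "a * x - b * y = a + b - 1" using assms(4-6) unfolding L lower_leaning_def by simp
  moreover have "a * (int (cq u (Suc (2*j))) + 1) - b * (int (cp u (Suc (2*j))) - 1) = a + b - 1"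
    using det by (simp add: algebra_simps)
  ultimately have "int (cq u (Suc (2*j))) + 1 = x \<and> int (cp u (Suc (2*j))) - 1 = y"
    using assms(7,8) bound unfolding L
    by (intro lattice_point_unique_in_period[OF assms(2)]) simp_all
  thus ?thesis unfolding L by simp
qed

lemma prefix_wpow_E_odd: "prefix (wpow (E u (2*j)) (u (Suc (2*j)))) (E u (Suc (2*j)))"
proof (cases j)
  case (Suc j')
  then have "Suc (2*j) = Suc (Suc (Suc (2*j')))" and "2*j = Suc (Suc (2*j'))" by simp_all
  then show ?thesis by simp
qed simp

lemma E_even_factors:
  fixes j :: nat
  defines "n \<equiv> Suc (Suc (2*j))"
  assumes "u n \<ge> 1" and "E u n = x @ y" and "length x = length (E u (Suc (2*j)))"
  shows "prefix (wpow (E u (2*j)) (u (Suc (2*j)))) x"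
    and "suffix (wpow (E u (Suc (2*j))) (u n - 1)) y"
proof -
  let ?W = "wpow (E u (2*j)) (u (Suc (2*j)))" and ?S = "wpow (E u (Suc (2*j))) (u n - 1)"
  obtain k where "u n = Suc k" using assms(2) by (cases "u n") auto
  hence En: "E u n = E u (2*j) @ E u (Suc (2*j)) @ ?S"
    unfolding n_def by (simp add: wpow_Suc)
  obtain X where E1: "E u (Suc (2*j)) = ?W @ X"
    using prefix_wpow_E_odd by (auto simp: prefix_def)
  have "E u (2*j) @ ?W = ?W @ E u (2*j)" by (simp flip: wpow_Suc wpow_Suc_right)
  hence "E u n = ?W @ E u (2*j) @ X @ ?S" unfolding En E1 by (metis append_assoc)
  hence "prefix ?W (E u n)" by (rule prefixI)
  moreover have "prefix x (E u n)" using assms(3) by simp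
  moreover have "length ?W \<le> length x" using assms(4) E1 by simp
  ultimately show "prefix ?W x" by (rule prefix_length_prefix)
  have "suffix ?S (E u n)" unfolding En by (simp add: suffix_appendI)
  moreover have "suffix y (E u n)" using assms(3) by (auto simp: suffix_def)
  moreover have "length ?S \<le> length y"
    using assms(4) arg_cong[OF En, of length] arg_cong[OF assms(3), of length] by simp
  ultimately show "suffix ?S y" by (rule suffix_length_suffix)
qed

theorem proposition2:
  fixes a b :: int and u :: "nat \<Rightarrow> nat" and i :: nat and L1 :: "int \<times> int"
  assumes "coprime a b" and "0 < a" and "a \<le> b"
    and "i \<ge> 1"
    and "\<forall>k\<in>{1..2*i}. u k \<ge> 1"
    and "real_of_int a / real_of_int b = cf0 u (2*i)"
    and "lower_leaning a b 0 L1" and "0 < fst L1" and "fst L1 \<le> b"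
  shows "((fst L1 - 0, snd L1 - 0) = (int (cq u (2*i-1)) + 1, int (cp u (2*i-1)) - 1)) \<and>
    ((b - fst L1, a - snd L1) =
           ((int (u (2*i)) - 1) * int (cq u (2*i-1)) + int (cq u (2*i-2)) - 1,
            (int (u (2*i)) - 1) * int (cp u (2*i-1)) + int (cp u (2*i-2)) + 1)) \<and>
    prefix (wpow (E u (2*i-2)) (u (2*i-1))) (freeman a b 0 (0,0) L1) \<and>
    suffix (wpow (E u (2*i-1)) (u (2*i) - 1)) (freeman a b 0 L1 (b,a))"
proof -
  obtain j where "i = Suc j" using assms(4) by (cases i) auto
  then have idx: "2*i = Suc (Suc (2*j))" "2*i-1 = Suc (2*j)" "2*i-2 = 2*j" by auto
  define n p q where "n = Suc (Suc (2*j))" and "p = cp u n" and "q = cq u n"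
  have upos: "\<forall>k\<in>{1..n}. u k \<ge> 1" using assms(5) idx unfolding n_def by simp
  have ab: "a = int p" "b = int q"
    using coprime_fraction_eq_convergents[OF assms(1,2) _ upos] assms(2,3,6) idx unfolding p_def q_def n_def
    by simp_all
  have L1: "L1 = (int (cq u (Suc (2*j))) + 1, int (cp u (Suc (2*j))) - 1)"
    using lower_leaning_point_convergents[OF assms(1) upos[unfolded n_def]] ab assms(7-9)
    unfolding p_def q_def n_def by blast
  have "u n \<ge> 1" using upos unfolding n_def by simp
  then have "cp u (Suc (2*j)) + cq u (Suc (2*j)) \<le> p + q"
    unfolding p_def q_def n_def by (rule cp_plus_cq_le_Suc)
  moreover have "in_line a b 0 L1" using assms(2,3,7) by (simp add: in_line_def lower_leaning_def)
  ultimately have split: "E u n = freeman a b 0 (0,0) L1 @ freeman a b 0 L1 (b,a)"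
    using christoffel_word_freeman_split[of p q L1] assms(2,3) ab L1
    unfolding E_eq_christoffel_word p_def[symmetric] q_def[symmetric] by simp
  have "length (freeman a b 0 (0,0) L1) = length (E u (Suc (2*j)))"
    using L1 by (simp add: freeman_def length_E)
  with E_even_factors[of u j] split upos have words:
    "prefix (wpow (E u (2*j)) (u (Suc (2*j)))) (freeman a b 0 (0,0) L1)"
    "suffix (wpow (E u (Suc (2*j))) (u n - 1)) (freeman a b 0 L1 (b,a))"
    unfolding n_def by auto
  have "(b - fst L1, a - snd L1) =
      ((int (u n) - 1) * int (cq u (Suc (2*j))) + int (cq u (2*j)) - 1,
       (int (u n) - 1) * int (cp u (Suc (2*j))) + int (cp u (2*j)) + 1)"
    using L1 ab unfolding p_def q_def n_def by (simp add: algebra_simps)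
  with L1 words show ?thesis
    unfolding idx(2,3) unfolding idx(1) n_def by simp
qed

end
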